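(* For every integer $N$, in $\bar k[[t]]$: $\Omega^{(N)}/\Omega^{(-1)}=-\sum_{n\ge0}\Psi_N\big(1/T^{n+1}\big)t^n$ if $N\ge0$, and $\Omega^{(N)}/\Omega^{(-1)}=\prod_{i=1}^{|N|-1}\big(t-T^{q^{-i}}\big)$ if $N<0$.
   Context: $A=\mathbb F_q[T]$, $A_+$ its monic elements, $\bar k$ the algebraic closure of $\mathbb F_q(T)$ in $\mathbb C_\infty$ (completion of an algebraic closure of $\mathbb F_q((1/T))$, $|T|_\infty=q$), $\tilde T$ a fixed $(q-1)$-th root of $-T$. $\Omega(t)=\tilde T^{-q}\prod_{i\ge1}(1-t/T^{q^i})$ (its coefficients lie in $\bar k$). For $g=\sum a_it^i$ and $n\in\mathbb Z$, $g^{(n)}=\sum a_i^{q^n}t^i$. For integers $N\ge0$, $\Psi_N(z)=\prod_{a\in A,\deg a<N}(z-a)\big/\prod_{a\in A_+,\deg a=N}a$ (so $\Psi_0(z)=z$). *)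

theory Defs
  imports "HOL-Computational_Algebra.Computational_Algebra" "HOL-Library.Cardinality"
begin

text \<open>Abstract model of the ambient field C_infinity: a field 'K with a real-valued
  absolute value absK which is non-archimedean and complete, algebraically closed,
  containing a copy of F_q (a finite field type 'f, embedded by a ring hom iota)
  and the element T with absK T = q.\<close>

definition conv_abs :: "('K::field \<Rightarrow> real) \<Rightarrow> (nat \<Rightarrow> 'K) \<Rightarrow> 'K \<Rightarrow> bool" where
  "conv_abs absK s L \<longleftrightarrow> ((\<lambda>m. absK (s m - L)) \<longlonglongrightarrow> 0)"

definition lim_abs :: "('K::field \<Rightarrow> real) \<Rightarrow> (nat \<Rightarrow> 'K) \<Rightarrow> 'K" where
  "lim_abs absK s = (THE L. conv_abs absK s L)"

definition Cinf_setting :: "('f::{field,finite} \<Rightarrow> 'K::field) \<Rightarrow> 'K \<Rightarrow> ('K \<Rightarrow> real) \<Rightarrow> bool" where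
  "Cinf_setting \<iota> T absK \<longleftrightarrow>
     \<iota> 0 = 0 \<and> \<iota> 1 = 1 \<and> (\<forall>a b. \<iota> (a + b) = \<iota> a + \<iota> b) \<and> (\<forall>a b. \<iota> (a * b) = \<iota> a * \<iota> b) \<and>
     (\<forall>x. absK x \<ge> 0) \<and> (\<forall>x. absK x = 0 \<longleftrightarrow> x = 0) \<and>
     (\<forall>x y. absK (x * y) = absK x * absK y) \<and>
     (\<forall>x y. absK (x + y) \<le> max (absK x) (absK y)) \<and>
     (\<forall>s. (\<forall>e>0. \<exists>M. \<forall>m\<ge>M. \<forall>n\<ge>M. absK (s m - s n) < e) \<longrightarrow> (\<exists>L. conv_abs absK s L)) \<and>
     (\<forall>p :: 'K poly. degree p > 0 \<longrightarrow> (\<exists>x. poly p x = 0)) \<and>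
     absK T = real (card (UNIV :: 'f set))"

definition frob :: "nat \<Rightarrow> int \<Rightarrow> 'K::field \<Rightarrow> 'K" where
  "frob q n x = (if n \<ge> 0 then x ^ (q ^ nat n) else (THE y. y ^ (q ^ nat (- n)) = x))"

definition twist :: "nat \<Rightarrow> int \<Rightarrow> 'K::field fps \<Rightarrow> 'K fps" where
  "twist q n g = Abs_fps (\<lambda>i. frob q n (g $ i))"

definition Omega :: "('K::field \<Rightarrow> real) \<Rightarrow> nat \<Rightarrow> 'K \<Rightarrow> 'K \<Rightarrow> 'K fps" where
  "Omega absK q T Tt = fps_const (inverse (Tt ^ q)) *
     Abs_fps (\<lambda>n. lim_abs absK (\<lambda>m. (\<Prod>i=1..m. 1 - fps_const (inverse (T ^ (q ^ i))) * fps_X) $ n))"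

text \<open>Elements of A = F_q[T] inside 'K.\<close>
definition evA :: "('f::field \<Rightarrow> 'K::field) \<Rightarrow> 'K \<Rightarrow> 'f poly \<Rightarrow> 'K" where
  "evA \<iota> T a = poly (map_poly \<iota> a) T"

text \<open>Psi_N(z) = prod_{a in A, deg a < N} (z - a) / prod_{a in A_+, deg a = N} a
  (deg 0 = -infinity, so the zero polynomial is always included).\<close>
definition Psi :: "('f::{field,finite} \<Rightarrow> 'K::field) \<Rightarrow> 'K \<Rightarrow> nat \<Rightarrow> 'K \<Rightarrow> 'K" where
  "Psi \<iota> T N z =
     (\<Prod>a\<in>{a :: 'f poly. a = 0 \<or> degree a < N}. z - evA \<iota> T a) /
     (\<Prod>a\<in>{a :: 'f poly. lead_coeff a = 1 \<and> degree a = N}. evA \<iota> T a)"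

end

theory Submission
  imports Defs
begin

text \<open>
  Put \<open>c = 1/Tt^q\<close>. Coefficientwise, \<open>\<Omega> = c \<Prod>\<^sub>i\<^sub>\<ge>\<^sub>1 (1 - t/T^(q^i))\<close>, so its \<open>s\<close>-th twist is
  \<open>c\<^sup>(\<^sup>s\<^sup>) \<Prod>\<^sub>i\<^sub>\<ge>\<^sub>1 (1 - t/T^(q^(s+i)))\<close> for every integer \<open>s\<close>; negative twists exist
  because the field is algebraically closed and Frobenius is injective. Splitting off the first \<open>r\<close>
  factors and using \<open>(1/Tt) (-1/T) = c\<close>, which is \<open>Tt^(q-1) = -T\<close>, the constants telescope:
  \<open>\<Omega>\<^sup>(\<^sup>s\<^sup>) = (t - T^(q^(s+1))) \<cdots> (t - T^(q^(s+r))) \<Omega>\<^sup>(\<^sup>s\<^sup>+\<^sup>r\<^sup>)\<close>.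
  For \<open>N < 0\<close> this is the claim, with \<open>s = N\<close> and \<open>r = -N-1\<close>. For \<open>N \<ge> 0\<close> it gives
  \<open>\<Omega>\<^sup>(\<^sup>-\<^sup>1\<^sup>) = (t - T) (t - T^q) \<cdots> (t - T^(q^N)) \<Omega>\<^sup>(\<^sup>N\<^sup>)\<close>, and it remains to invert this
  polynomial. That is Carlitz's expansion: \<open>\<Psi>\<^sub>N\<close> is an \<open>F\<^sub>q\<close>-linear polynomial
  \<open>\<Sum>\<^sub>i\<^sub>\<le>\<^sub>N b\<^sub>i z^(q^i)\<close> vanishing at \<open>1, T, \<dots>, T^(N-1)\<close> with \<open>\<Psi>\<^sub>N(T^N) = 1\<close>, so
  \<open>-\<Sum>\<^sub>n \<Psi>\<^sub>N(1/T^(n+1)) t^n = \<Sum>\<^sub>i b\<^sub>i / (t - T^(q^i))\<close>, and multiplying by the polynomial leaves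
  only its leading coefficient.
\<close>

section \<open>Frobenius in a field containing \<open>F\<^sub>q\<close>\<close>

lemma card_field_ge_2: "2 \<le> CARD('a::{field,finite})"
proof -
  have "card {0::'a, 1} \<le> CARD('a)"
    by (rule card_mono) auto
  then show ?thesis
    by simp
qed

lemma field_power_card_eq_same: "(x::'a::{field,finite}) ^ CARD('a) = x"
proof (cases "x = 0")
  case True
  then show ?thesis
    using card_field_ge_2[where 'a = 'a] by simp
next
  case False
  let ?U = "UNIV - {0::'a}"
  have "(\<Prod>y\<in>?U. y) = (\<Prod>y\<in>?U. x * y)"
    using False by (intro prod.reindex_bij_witness[of _ "\<lambda>y. x * y" "\<lambda>y. y / x"]) auto
  also have "\<dots> = x ^ card ?U * (\<Prod>y\<in>?U. y)"
    by (simp add: prod.distrib)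
  finally have "x ^ card ?U = 1"
    by simp
  moreover have "Suc (card ?U) = CARD('a)"
    using card_field_ge_2[where 'a = 'a] by (simp add: card_Diff_singleton)
  ultimately show ?thesis
    by (metis mult_1_right power_Suc)
qed

lemma field_power_card_power_eq_same: "(x::'a::{field,finite}) ^ (CARD('a) ^ n) = x"
  by (induction n) (simp_all add: field_power_card_eq_same power_mult)

locale Fq_extension =
  fixes \<iota> :: "'f::{field,finite} \<Rightarrow> 'K::field"
  assumes \<iota>_0 [simp]: "\<iota> 0 = 0"
    and \<iota>_1 [simp]: "\<iota> 1 = 1"
    and \<iota>_add [simp]: "\<iota> (a + b) = \<iota> a + \<iota> b"
    and \<iota>_mult [simp]: "\<iota> (a * b) = \<iota> a * \<iota> b"
begin

lemma card_ge_2: "2 \<le> CARD('f)"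
  by (rule card_field_ge_2)

lemma \<iota>_minus [simp]: "\<iota> (- a) = - \<iota> a"
  by (metis add.right_inverse add_eq_0_iff2 \<iota>_0 \<iota>_add)

lemma \<iota>_diff [simp]: "\<iota> (a - b) = \<iota> a - \<iota> b"
  by (metis diff_conv_add_uminus \<iota>_add \<iota>_minus)

lemma \<iota>_power [simp]: "\<iota> (a ^ n) = \<iota> a ^ n"
  by (induction n) simp_all

lemma card_power_pos: "0 < CARD('f) ^ n"
  using card_ge_2 by simp

lemma inj_\<iota>: "inj \<iota>"
proof (rule injI)
  fix a b
  assume "\<iota> a = \<iota> b"
  then have "\<iota> ((a - b) * inverse (a - b)) = 0"
    by simp
  then show "a = b"
    by (cases "a = b") simp_all
qed

lemma \<iota>_power_q_power: "\<iota> c ^ (CARD('f) ^ n) = \<iota> c"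
  by (simp flip: \<iota>_power add: field_power_card_power_eq_same)

text \<open>No characteristic is assumed for \<open>'K\<close>: the Frobenius identities below all come from comparing
  two polynomials of degree at most \<open>q\<close> on the \<open>q\<close> points \<open>\<iota> c\<close>.\<close>
lemma poly_eq_on_Fq:
  fixes p r :: "'K poly"
  assumes "degree p \<le> CARD('f)" "degree r \<le> CARD('f)" "coeff p CARD('f) = coeff r CARD('f)"
    and "\<And>c. poly p (\<iota> c) = poly r (\<iota> c)"
  shows "p = r"
proof (rule ccontr)
  assume "p \<noteq> r"
  then have nz: "p - r \<noteq> 0"
    by simp
  have "degree (p - r) \<le> CARD('f)"
    using assms(1,2) by (intro degree_diff_le)
  moreover have "degree (p - r) \<noteq> CARD('f)"
  proof
    assume deg: "degree (p - r) = CARD('f)"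
    have "lead_coeff (p - r) = 0"
      by (simp only: deg coeff_diff assms(3) diff_self)
    with nz show False
      by (simp only: leading_coeff_0_iff)
  qed
  ultimately have "degree (p - r) < CARD('f)"
    by simp
  have "CARD('f) = card (range \<iota>)"
    using card_image[OF inj_\<iota>] by simp
  also have "\<dots> \<le> card {x. poly (p - r) x = 0}"
    using assms(4) poly_roots_finite[OF nz] by (intro card_mono) auto
  also have "\<dots> \<le> degree (p - r)"
    by (rule card_poly_roots_bound[OF nz])
  finally show False
    using \<open>degree (p - r) < CARD('f)\<close> by simp
qed

lemma frobenius_add: "(x + y) ^ CARD('f) = x ^ CARD('f) + (y::'K) ^ CARD('f)"
proof -
  have "[:1, 1:] ^ CARD('f) = (monom 1 CARD('f) + 1 :: 'K poly)"
  proof (rule poly_eq_on_Fq)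
    show "degree ([:1, 1:] ^ CARD('f) :: 'K poly) \<le> CARD('f)"
      by (simp add: degree_linear_power)
    show "degree (monom 1 CARD('f) + 1 :: 'K poly) \<le> CARD('f)"
      by (intro degree_add_le) (simp_all add: degree_monom_le)
    show "coeff ([:1, 1:] ^ CARD('f)) CARD('f) = coeff (monom 1 CARD('f) + 1 :: 'K poly) CARD('f)"
      using card_ge_2 by (simp add: coeff_linear_power)
    fix c
    show "poly ([:1, 1:] ^ CARD('f)) (\<iota> c) = poly (monom 1 CARD('f) + 1) (\<iota> c)"
      using \<iota>_power_q_power[of "c + 1" 1] \<iota>_power_q_power[of c 1]
      by (simp add: poly_monom add.commute)
  qed
  then have "poly ([:1, 1:] ^ CARD('f)) z = poly (monom 1 CARD('f) + 1) z" for z :: 'K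
    by (simp only:)
  then have frob_plus_1: "(1 + z) ^ CARD('f) = z ^ CARD('f) + 1" for z :: 'K
    by (simp add: poly_monom)
  show ?thesis
  proof (cases "y = 0")
    case True
    then show ?thesis
      using card_ge_2 by simp
  next
    case False
    have "(x + y) ^ CARD('f) = (y * (1 + x / y)) ^ CARD('f)"
      using False by (simp add: distrib_left add.commute)
    also have "\<dots> = y ^ CARD('f) * ((x / y) ^ CARD('f) + 1)"
      by (simp only: power_mult_distrib frob_plus_1)
    also have "\<dots> = x ^ CARD('f) + y ^ CARD('f)"
      using False by (simp add: distrib_left power_divide)
    finally show ?thesis .
  qed
qed

lemma power_Suc_q_power: "(x::'K) ^ (CARD('f) ^ Suc n) = (x ^ (CARD('f) ^ n)) ^ CARD('f)"
  by (simp only: power_Suc2 power_mult)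

lemma frobenius_power_add: "(x + y) ^ (CARD('f) ^ n) = x ^ (CARD('f) ^ n) + (y::'K) ^ (CARD('f) ^ n)"
  by (induction n) (simp_all only: power_0 power_one_right power_Suc_q_power frobenius_add)

lemma frobenius_power_minus: "(- x::'K) ^ (CARD('f) ^ n) = - (x ^ (CARD('f) ^ n))"
proof -
  have "(- x) ^ (CARD('f) ^ n) + x ^ (CARD('f) ^ n) = (- x + x) ^ (CARD('f) ^ n)"
    by (rule frobenius_power_add[symmetric])
  also have "\<dots> = 0"
    using card_power_pos[of n] by simp
  finally show ?thesis
    by (simp add: eq_neg_iff_add_eq_0)
qed

lemma frobenius_power_diff: "(x - y) ^ (CARD('f) ^ n) = x ^ (CARD('f) ^ n) - (y::'K) ^ (CARD('f) ^ n)"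
  by (simp only: diff_conv_add_uminus frobenius_power_add frobenius_power_minus)

lemma frobenius_power_sum: "(\<Sum>i\<in>A. f i) ^ (CARD('f) ^ n) = (\<Sum>i\<in>A. (f i :: 'K) ^ (CARD('f) ^ n))"
  using card_ge_2
  by (induction A rule: infinite_finite_induct) (simp_all add: frobenius_power_add power_0_left)

lemma frobenius_power_inj: "(x::'K) ^ (CARD('f) ^ n) = y ^ (CARD('f) ^ n) \<Longrightarrow> x = y"
  using frobenius_power_diff[of x y n] card_power_pos[of n] by simp

lemma prod_Fq_minus: "(\<Prod>c\<in>UNIV. x - \<iota> c) = x ^ CARD('f) - x"
proof -
  have "(\<Prod>c\<in>UNIV. [:- \<iota> c, 1:]) = (monom 1 CARD('f) - [:0, 1:] :: 'K poly)"
  proof (rule poly_eq_on_Fq)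
    show deg: "degree (\<Prod>c\<in>UNIV. [:- \<iota> c, 1:]) \<le> CARD('f)"
      by (subst degree_prod_eq_sum_degree) auto
    show "degree (monom 1 CARD('f) - [:0, 1:] :: 'K poly) \<le> CARD('f)"
      using card_ge_2 by (intro degree_diff_le) (auto simp: degree_monom_le)
    have "lead_coeff (\<Prod>c\<in>UNIV. [:- \<iota> c, 1:]) = 1"
      by (simp add: lead_coeff_prod)
    moreover have "degree (\<Prod>c\<in>UNIV. [:- \<iota> c, 1:]) = CARD('f)"
      by (subst degree_prod_eq_sum_degree) auto
    ultimately show "coeff (\<Prod>c\<in>UNIV. [:- \<iota> c, 1:]) CARD('f) = coeff (monom 1 CARD('f) - [:0, 1:]) CARD('f)"
      using card_ge_2 by (simp add: coeff_eq_0)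
    fix c
    show "poly (\<Prod>c\<in>UNIV. [:- \<iota> c, 1:]) (\<iota> c) = poly (monom 1 CARD('f) - [:0, 1:]) (\<iota> c)"
      using \<iota>_power_q_power[of c 1] by (auto simp: poly_prod prod_zero_iff poly_monom)
  qed
  then have "poly (\<Prod>c\<in>UNIV. [:- \<iota> c, 1:]) x = poly (monom 1 CARD('f) - [:0, 1:]) x"
    by (simp only:)
  then show ?thesis
    by (simp add: poly_prod poly_monom)
qed

lemma prod_Fq_minus_scaled: "(\<Prod>c\<in>UNIV. y - \<iota> c * d) = y ^ CARD('f) - d ^ (CARD('f) - 1) * (y::'K)"
proof (cases "d = 0")
  case True
  then show ?thesis
    using card_ge_2 by simp
next
  case False
  have "(\<Prod>c\<in>UNIV. y - \<iota> c * d) = (\<Prod>c\<in>UNIV. d * (y / d - \<iota> c))"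
    using False by (intro prod.cong) (simp_all add: right_diff_distrib)
  also have "\<dots> = d ^ CARD('f) * ((y / d) ^ CARD('f) - y / d)"
    by (simp add: prod.distrib prod_Fq_minus)
  also have "\<dots> = y ^ CARD('f) - d ^ (CARD('f) - 1) * y"
  proof -
    have "d ^ CARD('f) = d ^ (CARD('f) - 1) * d"
      using power_minus_mult[of "CARD('f)" d] card_ge_2 by simp
    then show ?thesis
      using False by (simp add: field_simps power_divide)
  qed
  finally show ?thesis .
qed

end

locale Fq_closed = Fq_extension \<iota> for \<iota> :: "'f::{field,finite} \<Rightarrow> 'K::field" +
  assumes alg_closed: "0 < degree (p :: 'K poly) \<Longrightarrow> \<exists>x. poly p x = 0"
begin

lemma ex1_frobenius_power_root: "\<exists>!y::'K. y ^ (CARD('f) ^ n) = x"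
proof (rule ex_ex1I)
  let ?p = "monom 1 (CARD('f) ^ n) - [:x:]"
  have "coeff ?p (CARD('f) ^ n) = 1"
    using card_power_pos[of n] by (simp add: coeff_eq_0)
  then have "CARD('f) ^ n \<le> degree ?p"
    by (intro le_degree) simp
  then have "0 < degree ?p"
    using card_power_pos[of n] by linarith
  then obtain y where "poly ?p y = 0"
    using alg_closed by blast
  then show "\<exists>y. y ^ (CARD('f) ^ n) = x"
    by (auto simp: poly_monom)
qed (use frobenius_power_inj in blast)

lemma frob_of_nat [simp]: "frob CARD('f) (int k) x = x ^ (CARD('f) ^ k)"
  by (simp add: frob_def)

lemma frob_neg_eq_iff: "frob CARD('f) (- int k) x = y \<longleftrightarrow> y ^ (CARD('f) ^ k) = (x::'K)"
proof (cases "k = 0")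
  case True
  then show ?thesis
    by (auto simp: frob_def)
next
  case False
  then have "frob CARD('f) (- int k) x = (THE y. y ^ (CARD('f) ^ k) = x)"
    by (simp add: frob_def)
  then show ?thesis
    using the1_equality[OF ex1_frobenius_power_root] theI'[OF ex1_frobenius_power_root] by auto
qed

lemma frob_neg_power [simp]: "frob CARD('f) (- int k) x ^ (CARD('f) ^ k) = (x::'K)"
  using frob_neg_eq_iff by blast

lemma frob_add: "frob CARD('f) s (x + y) = frob CARD('f) s x + frob CARD('f) s (y::'K)"
  by (cases s rule: int_cases2) (simp_all add: frob_neg_eq_iff frobenius_power_add)

lemma frob_mult: "frob CARD('f) s (x * y) = frob CARD('f) s x * frob CARD('f) s (y::'K)"
  by (cases s rule: int_cases2) (simp_all add: frob_neg_eq_iff power_mult_distrib)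

lemma frob_0 [simp]: "frob CARD('f) s (0::'K) = 0"
  by (cases s rule: int_cases2) (simp_all add: frob_neg_eq_iff zero_power card_power_pos)

lemma frob_1 [simp]: "frob CARD('f) s (1::'K) = 1"
  by (cases s rule: int_cases2) (simp_all add: frob_neg_eq_iff)

lemma frob_minus: "frob CARD('f) s (- x) = - frob CARD('f) s (x::'K)"
  using frob_add[of s x "- x"] by (simp add: eq_neg_iff_add_eq_0 add.commute)

lemma frob_diff: "frob CARD('f) s (x - y) = frob CARD('f) s x - frob CARD('f) s (y::'K)"
  by (simp only: diff_conv_add_uminus frob_add frob_minus)

lemma frob_eq_0_iff [simp]: "frob CARD('f) s (x::'K) = 0 \<longleftrightarrow> x = 0"
  using card_power_pos by (cases s rule: int_cases2) (auto simp: frob_neg_eq_iff)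

lemma frob_inverse: "frob CARD('f) s (inverse x) = inverse (frob CARD('f) s (x::'K))"
proof (cases "x = 0")
  case False
  then have "frob CARD('f) s x * frob CARD('f) s (inverse x) = 1"
    by (simp flip: frob_mult)
  then show ?thesis
    by (rule inverse_unique[symmetric])
qed simp

lemma frob_sum: "frob CARD('f) s (\<Sum>i\<in>A. f i) = (\<Sum>i\<in>A. frob CARD('f) s (f i :: 'K))"
  by (induction A rule: infinite_finite_induct) (simp_all add: frob_add)

lemma frob_power_q_power: "frob CARD('f) s (x ^ (CARD('f) ^ k)) = frob CARD('f) (s + int k) (x::'K)"
proof (cases s rule: int_cases2)
  case (nonneg j)
  have "(x ^ (CARD('f) ^ k)) ^ (CARD('f) ^ j) = x ^ (CARD('f) ^ (j + k))"
    by (simp only: power_mult[symmetric] power_add mult.commute)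
  moreover have "s + int k = int (j + k)"
    using nonneg by simp
  ultimately show ?thesis
    using nonneg by (simp only: frob_of_nat)
next
  case (nonpos j)
  show ?thesis
  proof (cases "j \<le> k")
    case True
    then have "CARD('f) ^ k = CARD('f) ^ (k - j) * CARD('f) ^ j"
      by (simp flip: power_add)
    then have "(x ^ (CARD('f) ^ (k - j))) ^ (CARD('f) ^ j) = x ^ (CARD('f) ^ k)"
      by (simp only: power_mult)
    moreover have "s + int k = int (k - j)"
      using nonpos True by simp
    ultimately show ?thesis
      using nonpos by (simp only: frob_of_nat frob_neg_eq_iff)
  next
    case False
    then have "CARD('f) ^ j = CARD('f) ^ (j - k) * CARD('f) ^ k"
      by (simp flip: power_add)
    then have "frob CARD('f) (- int (j - k)) x ^ (CARD('f) ^ j) = x ^ (CARD('f) ^ k)"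
      by (simp only: power_mult frob_neg_power)
    moreover have "s + int k = - int (j - k)"
      using nonpos False by simp
    ultimately show ?thesis
      using nonpos by (simp only: frob_neg_eq_iff)
  qed
qed

lemma frob_frob: "frob CARD('f) a (frob CARD('f) b x) = frob CARD('f) (a + b) (x::'K)"
proof (cases b rule: int_cases2)
  case (nonneg k)
  then show ?thesis
    by (simp add: frob_power_q_power)
next
  case (nonpos k)
  have "frob CARD('f) (a + b) x = frob CARD('f) (a + b) (frob CARD('f) b x ^ (CARD('f) ^ k))"
    using nonpos by simp
  also have "\<dots> = frob CARD('f) (a + b + int k) (frob CARD('f) b x)"
    by (rule frob_power_q_power)
  also have "a + b + int k = a"
    using nonpos by simp
  finally show ?thesis ..
qed

lemma twist_nth [simp]: "twist CARD('f) s f $ n = frob CARD('f) s (f $ n :: 'K)"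
  by (simp add: twist_def)

lemma twist_mult: "twist CARD('f) s (f * g) = twist CARD('f) s f * twist CARD('f) s (g :: 'K fps)"
  by (rule fps_ext) (simp add: fps_mult_nth frob_sum frob_mult)

lemma twist_1 [simp]: "twist CARD('f) s (1 :: 'K fps) = 1"
  by (rule fps_ext) (simp add: fps_one_nth)

lemma twist_diff: "twist CARD('f) s (f - g) = twist CARD('f) s f - twist CARD('f) s (g :: 'K fps)"
  by (rule fps_ext) (simp add: frob_diff)

lemma twist_fps_const [simp]: "twist CARD('f) s (fps_const c) = fps_const (frob CARD('f) s (c::'K))"
  by (rule fps_ext) simp

lemma twist_fps_X [simp]: "twist CARD('f) s (fps_X :: 'K fps) = fps_X"
  by (rule fps_ext) (simp add: fps_X_nth)

lemma twist_prod: "twist CARD('f) s (\<Prod>i\<in>A. f i) = (\<Prod>i\<in>A. twist CARD('f) s (f i :: 'K fps))"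
  by (induction A rule: infinite_finite_induct) (simp_all add: twist_mult)

end

section \<open>Non-archimedean absolute values\<close>

locale nonarch_abs =
  fixes absK :: "'K::field \<Rightarrow> real"
  assumes abs_nonneg: "0 \<le> absK x"
    and abs_eq_0_iff [simp]: "absK x = 0 \<longleftrightarrow> x = 0"
    and abs_mult: "absK (x * y) = absK x * absK y"
    and abs_ultrametric: "absK (x + y) \<le> max (absK x) (absK y)"
begin

lemma abs_0 [simp]: "absK 0 = 0"
  by simp

lemma abs_1 [simp]: "absK 1 = 1"
  using abs_mult[of 1 1] by simp

lemma abs_minus [simp]: "absK (- x) = absK x"
proof -
  have "absK (- 1) * absK (- 1) = 1"
    by (simp flip: abs_mult)
  then have "absK (- 1) = 1"
    using abs_nonneg[of "- 1"] by (metis abs_of_nonneg real_sqrt_abs2 real_sqrt_one)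
  then show ?thesis
    using abs_mult[of "- 1" x] by simp
qed

lemma abs_minus_commute: "absK (x - y) = absK (y - x)"
  using abs_minus[of "x - y"] by simp

lemma abs_power: "absK (x ^ n) = absK x ^ n"
  by (induction n) (simp_all add: abs_mult)

lemma abs_inverse: "absK (inverse x) = inverse (absK x)"
proof (cases "x = 0")
  case False
  then have "absK x * absK (inverse x) = 1"
    by (simp flip: abs_mult)
  then show ?thesis
    by (rule inverse_unique[symmetric])
qed simp

lemma abs_triangle: "absK (x + y) \<le> absK x + absK y"
  using abs_ultrametric[of x y] abs_nonneg[of x] abs_nonneg[of y] by linarith

lemma abs_add_eq_right: "absK x < absK y \<Longrightarrow> absK (x + y) = absK y"
  using abs_ultrametric[of x y] abs_ultrametric[of "x + y" "- x"] by (auto simp: max_def split: if_split_asm)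

lemma conv_abs_unique: "conv_abs absK s a \<Longrightarrow> conv_abs absK s b \<Longrightarrow> a = b"
proof -
  assume "conv_abs absK s a" "conv_abs absK s b"
  then have "(\<lambda>m. absK (s m - a) + absK (s m - b)) \<longlonglongrightarrow> 0 + 0"
    unfolding conv_abs_def by (intro tendsto_add)
  moreover have "absK (b - a) \<le> absK (s m - a) + absK (s m - b)" for m
    using abs_triangle[of "s m - a" "b - s m"] abs_minus_commute[of b "s m"] by simp
  ultimately have "absK (b - a) \<le> 0"
    by (intro LIMSEQ_le_const) auto
  then show "a = b"
    using abs_nonneg[of "b - a"] by simp
qed

lemma lim_abs_eqI: "conv_abs absK s L \<Longrightarrow> lim_abs absK s = L"
  unfolding lim_abs_def using conv_abs_unique by blast

lemma conv_abs_const: "conv_abs absK (\<lambda>m. c) c"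
  by (simp add: conv_abs_def)

lemma conv_abs_dominated:
  assumes "\<And>m. absK (s m - a) \<le> g m" "g \<longlonglongrightarrow> 0"
  shows "conv_abs absK s a"
  unfolding conv_abs_def
  using abs_nonneg assms(1) by (intro tendsto_sandwich[OF _ _ tendsto_const assms(2)]) simp_all

lemma conv_abs_add:
  assumes "conv_abs absK s a" "conv_abs absK t b"
  shows "conv_abs absK (\<lambda>m. s m + t m) (a + b)"
proof (rule conv_abs_dominated)
  show "(\<lambda>m. absK (s m - a) + absK (t m - b)) \<longlonglongrightarrow> 0"
    using tendsto_add[OF assms[unfolded conv_abs_def]] by simp
  show "absK (s m + t m - (a + b)) \<le> absK (s m - a) + absK (t m - b)" for m
    using abs_triangle[of "s m - a" "t m - b"] by (simp add: algebra_simps)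
qed

lemma conv_abs_cmult: "conv_abs absK s a \<Longrightarrow> conv_abs absK (\<lambda>m. c * s m) (c * a)"
  unfolding conv_abs_def
  using tendsto_mult_left[of "\<lambda>m. absK (s m - a)" 0 sequentially "absK c"]
  by (simp add: abs_mult[symmetric] right_diff_distrib)

lemma conv_abs_sum:
  "finite A \<Longrightarrow> (\<And>i. i \<in> A \<Longrightarrow> conv_abs absK (s i) (a i)) \<Longrightarrow>
    conv_abs absK (\<lambda>m. \<Sum>i\<in>A. s i m) (\<Sum>i\<in>A. a i)"
  by (induction A rule: finite_induct) (simp_all add: conv_abs_const conv_abs_add)

lemma conv_abs_ignore_initial: "conv_abs absK s a \<Longrightarrow> conv_abs absK (\<lambda>m. s (m + r)) a"
  unfolding conv_abs_def by (rule LIMSEQ_ignore_initial_segment)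

end

locale complete_nonarch_abs = nonarch_abs absK for absK :: "'K::field \<Rightarrow> real" +
  assumes complete:
    "\<forall>e>0. \<exists>M. \<forall>m\<ge>M. \<forall>n\<ge>M. absK (s m - s n) < e \<Longrightarrow> \<exists>L. conv_abs absK s L"
begin

text \<open>This criterion needs the ultrametric inequality.\<close>
lemma conv_abs_if_differences_tendsto_0:
  assumes "(\<lambda>m. absK (s (Suc m) - s m)) \<longlonglongrightarrow> 0"
  shows "\<exists>L. conv_abs absK s L"
proof (rule complete, intro allI impI)
  fix e :: real
  assume "0 < e"
  then obtain M where "\<forall>m\<ge>M. norm (absK (s (Suc m) - s m) - 0) < e"
    using LIMSEQ_D[OF assms] by blast
  then have M: "\<And>m. M \<le> m \<Longrightarrow> absK (s (Suc m) - s m) < e"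
    using abs_nonneg by simp
  have close: "absK (s n - s M) < e" if "M \<le> n" for n
    using that
  proof (induction n rule: dec_induct)
    case (step n)
    have "s (Suc n) - s M = (s (Suc n) - s n) + (s n - s M)"
      by simp
    then show ?case
      using abs_ultrametric[of "s (Suc n) - s n" "s n - s M"] M[OF step(1)] step(3) by simp
  qed (use \<open>0 < e\<close> in simp)
  show "\<exists>M. \<forall>m\<ge>M. \<forall>n\<ge>M. absK (s m - s n) < e"
  proof (intro exI allI impI)
    fix m n
    assume "M \<le> m" "M \<le> n"
    have "s m - s n = (s m - s M) + (s M - s n)"
      by simp
    then show "absK (s m - s n) < e"
      using abs_ultrametric[of "s m - s M" "s M - s n"] close[OF \<open>M \<le> m\<close>] close[OF \<open>M \<le> n\<close>]
        abs_minus_commute[of "s M" "s n"] by simp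
  qed
qed

end

section \<open>Carlitz polynomials\<close>

lemma finite_degree_le: "finite {p :: 'a::{zero,finite} poly. degree p \<le> N}"
proof (rule finite_subset)
  show "{p :: 'a poly. degree p \<le> N} \<subseteq> Poly ` {xs. set xs \<subseteq> UNIV \<and> length xs \<le> Suc N}"
  proof
    fix p :: "'a poly"
    assume "p \<in> {p. degree p \<le> N}"
    then have "length (coeffs p) \<le> Suc N"
      by (cases "p = 0") (simp_all add: length_coeffs)
    then show "p \<in> Poly ` {xs. set xs \<subseteq> UNIV \<and> length xs \<le> Suc N}"
      by (intro image_eqI[of _ _ "coeffs p"]) simp_all
  qed
  show "finite (Poly ` {xs. set xs \<subseteq> (UNIV :: 'a set) \<and> length xs \<le> Suc N})"
    by (intro finite_imageI finite_lists_length_le) simp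
qed

definition polys_degree_less :: "nat \<Rightarrow> 'a::zero poly set" where
  "polys_degree_less N = {a. a = 0 \<or> degree a < N}"

definition monic_polys_degree :: "nat \<Rightarrow> 'a::{zero,one} poly set" where
  "monic_polys_degree N = {a. lead_coeff a = 1 \<and> degree a = N}"

lemma mem_polys_degree_less_iff:
  "a \<in> polys_degree_less N \<longleftrightarrow> degree a \<le> N \<and> coeff a N = 0"
proof
  assume "a \<in> polys_degree_less N"
  then show "degree a \<le> N \<and> coeff a N = 0"
    by (auto simp: polys_degree_less_def coeff_eq_0)
next
  assume a: "degree a \<le> N \<and> coeff a N = 0"
  then have "a = 0" if "degree a = N"
    using that leading_coeff_0_iff by metis
  with a show "a \<in> polys_degree_less N"
    by (auto simp: polys_degree_less_def)
qed

lemma polys_degree_less_0: "polys_degree_less 0 = {0}"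
  by (auto simp: polys_degree_less_def)

lemma polys_degree_less_Suc: "polys_degree_less (Suc N) = {a. degree a \<le> N}"
  by (auto simp: polys_degree_less_def)

lemma finite_polys_degree_less: "finite (polys_degree_less N :: 'a::{zero,finite} poly set)"
  by (rule finite_subset[OF _ finite_degree_le[of N]]) (auto simp: polys_degree_less_def)

lemma finite_monic_polys_degree: "finite (monic_polys_degree N :: 'a::{zero,one,finite} poly set)"
  by (rule finite_subset[OF _ finite_degree_le[of N]]) (auto simp: monic_polys_degree_def)

lemma bij_betw_polys_degree_less_Suc:
  "bij_betw (\<lambda>(b, c). b + monom c N) (polys_degree_less N \<times> UNIV)
     (polys_degree_less (Suc N) :: 'a::ab_group_add poly set)"
  by (rule bij_betw_byWitness[where f' = "\<lambda>a. (a - monom (coeff a N) N, coeff a N)"])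
    (auto simp: polys_degree_less_Suc mem_polys_degree_less_iff degree_monom_le
      intro!: degree_add_le degree_diff_le)

lemma prod_polys_degree_less_Suc:
  "(\<Prod>a\<in>polys_degree_less (Suc N). h a)
     = (\<Prod>c\<in>UNIV. \<Prod>b\<in>polys_degree_less N. h (b + monom (c::'a::{ab_group_add,finite}) N))"
proof -
  have "(\<Prod>a\<in>polys_degree_less (Suc N). h a)
      = (\<Prod>(b, c)\<in>polys_degree_less N \<times> UNIV. h (b + monom c N))"
    by (subst prod.reindex_bij_betw[OF bij_betw_polys_degree_less_Suc, symmetric]) (simp add: split_def)
  also have "\<dots> = (\<Prod>b\<in>polys_degree_less N. \<Prod>c\<in>UNIV. h (b + monom c N))"
    by (simp add: prod.cartesian_product)
  also have "\<dots> = (\<Prod>c\<in>UNIV. \<Prod>b\<in>polys_degree_less N. h (b + monom c N))"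
    by (rule prod.swap)
  finally show ?thesis .
qed

lemma bij_betw_polys_degree_less_monic:
  "bij_betw (\<lambda>b. monom 1 N - b) (polys_degree_less N)
     (monic_polys_degree N :: 'a::comm_ring_1 poly set)"
proof (rule bij_betw_byWitness[where f' = "\<lambda>b. monom 1 N - b"])
  show "(\<lambda>b. monom 1 N - b) ` polys_degree_less N \<subseteq> (monic_polys_degree N :: 'a poly set)"
  proof clarify
    fix a :: "'a poly"
    assume a: "a \<in> polys_degree_less N"
    then have "degree (monom 1 N - a) \<le> N" "coeff (monom 1 N - a) N = 1"
      by (auto simp: mem_polys_degree_less_iff degree_monom_le intro!: degree_diff_le)
    moreover from this have "N \<le> degree (monom 1 N - a)"
      by (intro le_degree) simp
    ultimately show "monom 1 N - a \<in> monic_polys_degree N"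
      by (simp add: monic_polys_degree_def)
  qed
  show "(\<lambda>b. monom 1 N - b) ` monic_polys_degree N \<subseteq> (polys_degree_less N :: 'a poly set)"
    by (auto simp: monic_polys_degree_def mem_polys_degree_less_iff degree_monom_le
        intro!: degree_diff_le)
qed simp_all

definition q_polynomial :: "nat \<Rightarrow> nat \<Rightarrow> ('a::field \<Rightarrow> 'a) \<Rightarrow> bool" where
  "q_polynomial q N f \<longleftrightarrow> (\<exists>b. \<forall>z. f z = (\<Sum>i\<le>N. b i * z ^ (q ^ i)))"

context Fq_extension
begin

lemma q_polynomial_add:
  fixes f :: "'K \<Rightarrow> 'K"
  shows "q_polynomial CARD('f) N f \<Longrightarrow> f (x + y) = f x + f y"
  by (auto simp: q_polynomial_def frobenius_power_add distrib_left sum.distrib)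

lemma q_polynomial_Fq_smult:
  fixes f :: "'K \<Rightarrow> 'K"
  shows "q_polynomial CARD('f) N f \<Longrightarrow> f (\<iota> c * y) = \<iota> c * f y"
  by (auto simp: q_polynomial_def power_mult_distrib \<iota>_power_q_power sum_distrib_left
      mult.left_commute)

lemma q_polynomial_diff:
  fixes f :: "'K \<Rightarrow> 'K"
  assumes "q_polynomial CARD('f) N f"
  shows "f (x - y) = f x - f y"
proof -
  have "f (\<iota> (- 1) * y) = \<iota> (- 1) * f y"
    by (rule q_polynomial_Fq_smult[OF assms])
  then have "f (- y) = - f y"
    by simp
  then show ?thesis
    using q_polynomial_add[OF assms, of x "- y"] by simp
qed

lemma q_polynomial_Suc:
  fixes f :: "'K \<Rightarrow> 'K"
  assumes "q_polynomial CARD('f) N f"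
  shows "q_polynomial CARD('f) (Suc N) (\<lambda>z. f z ^ CARD('f) - C * f z)"
proof -
  obtain b where b: "\<And>z. f z = (\<Sum>i\<le>N. b i * z ^ (CARD('f) ^ i))"
    using assms unfolding q_polynomial_def by blast
  define b' where "b' i = (if i = 0 then 0 else b (i - 1) ^ CARD('f)) - C * (if i \<le> N then b i else 0)"
    for i
  have "f z ^ CARD('f) - C * f z = (\<Sum>i\<le>Suc N. b' i * z ^ (CARD('f) ^ i))" for z
  proof -
    have "f z ^ CARD('f) = (\<Sum>i\<le>N. (b i * z ^ (CARD('f) ^ i)) ^ CARD('f))"
      using frobenius_power_sum[of "\<lambda>i. b i * z ^ (CARD('f) ^ i)" "{..N}" 1] by (simp only: b power_one_right)
    also have "\<dots> = (\<Sum>i\<le>N. b i ^ CARD('f) * z ^ (CARD('f) ^ Suc i))"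
      by (simp only: power_mult_distrib power_Suc_q_power)
    also have "\<dots> = (\<Sum>i\<le>Suc N. (if i = 0 then 0 else b (i - 1) ^ CARD('f)) * z ^ (CARD('f) ^ i))"
      by (simp only: sum.atMost_Suc_shift) simp
    finally have "f z ^ CARD('f) = \<dots>" .
    moreover have "f z = (\<Sum>i\<le>Suc N. (if i \<le> N then b i else 0) * z ^ (CARD('f) ^ i))"
      by (simp add: b)
    ultimately show ?thesis
      unfolding b'_def by (simp add: left_diff_distrib sum_subtractf sum_distrib_left mult.assoc)
  qed
  then show ?thesis
    unfolding q_polynomial_def by blast
qed

lemma map_poly_\<iota>_add: "map_poly \<iota> (a + b) = map_poly \<iota> a + map_poly \<iota> b"
  by (rule poly_eqI) (simp add: coeff_map_poly)

lemma evA_add: "evA \<iota> T (a + b) = evA \<iota> T a + evA \<iota> T b"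
  by (simp add: evA_def map_poly_\<iota>_add)

lemma map_poly_\<iota>_diff: "map_poly \<iota> (a - b) = map_poly \<iota> a - map_poly \<iota> b"
  by (rule poly_eqI) (simp add: coeff_map_poly)

lemma evA_diff: "evA \<iota> T (a - b) = evA \<iota> T a - evA \<iota> T b"
  by (simp add: evA_def map_poly_\<iota>_diff)

lemma evA_monom: "evA \<iota> T (monom c n) = \<iota> c * T ^ n"
  by (simp add: evA_def map_poly_monom poly_monom)

lemma evA_0 [simp]: "evA \<iota> T 0 = 0"
  by (simp add: evA_def)

lemma evA_pCons: "evA \<iota> T (pCons c a) = \<iota> c + T * evA \<iota> T a"
  by (simp add: evA_def map_poly_pCons)

definition carlitz_e :: "'K \<Rightarrow> nat \<Rightarrow> 'K \<Rightarrow> 'K" where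
  "carlitz_e T N z = (\<Prod>a\<in>polys_degree_less N. z - evA \<iota> T a)"

definition carlitz_D :: "'K \<Rightarrow> nat \<Rightarrow> 'K" where
  "carlitz_D T N = (\<Prod>a\<in>monic_polys_degree N. evA \<iota> T a)"

lemma Psi_eq_carlitz_e_divide_D: "Psi \<iota> T N z = carlitz_e T N z / carlitz_D T N"
  unfolding Psi_def carlitz_e_def carlitz_D_def polys_degree_less_def monic_polys_degree_def ..

lemma carlitz_e_0: "carlitz_e T 0 z = z"
  by (simp add: carlitz_e_def polys_degree_less_0)

text \<open>A polynomial of degree at most \<open>N\<close> is \<open>b + c T\<^sup>N\<close> with \<open>deg b < N\<close> and \<open>c \<in> F\<^sub>q\<close>;
  additivity of \<open>carlitz_e T N\<close> turns the product over these into a product over \<open>c\<close>.\<close>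
lemma carlitz_e_Suc:
  assumes "q_polynomial CARD('f) N (carlitz_e T N)"
  shows "carlitz_e T (Suc N) z
    = carlitz_e T N z ^ CARD('f) - carlitz_e T N (T ^ N) ^ (CARD('f) - 1) * carlitz_e T N z"
proof -
  have "carlitz_e T (Suc N) z = (\<Prod>c\<in>UNIV. carlitz_e T N (z - \<iota> c * T ^ N))"
    unfolding carlitz_e_def prod_polys_degree_less_Suc
    by (intro prod.cong refl) (simp add: evA_add evA_monom algebra_simps)
  also have "\<dots> = (\<Prod>c\<in>UNIV. carlitz_e T N z - \<iota> c * carlitz_e T N (T ^ N))"
    by (simp only: q_polynomial_diff[OF assms] q_polynomial_Fq_smult[OF assms])
  also have "\<dots> = carlitz_e T N z ^ CARD('f) - carlitz_e T N (T ^ N) ^ (CARD('f) - 1) * carlitz_e T N z"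
    by (rule prod_Fq_minus_scaled)
  finally show ?thesis .
qed

lemma q_polynomial_carlitz_e: "q_polynomial CARD('f) N (carlitz_e T N)"
proof (induction N)
  case 0
  show ?case
    unfolding q_polynomial_def by (intro exI[of _ "\<lambda>_. 1"]) (simp add: carlitz_e_0)
next
  case (Suc N)
  then show ?case
    using q_polynomial_Suc[OF Suc] by (simp add: carlitz_e_Suc[OF Suc] flip: fun_eq_iff)
qed

lemma carlitz_e_T_power_less: "m < N \<Longrightarrow> carlitz_e T N (T ^ m) = 0"
proof -
  assume "m < N"
  then have "(monom 1 m :: 'f poly) \<in> polys_degree_less N"
    by (simp add: polys_degree_less_def degree_monom_eq)
  moreover have "T ^ m - evA \<iota> T (monom 1 m) = 0"
    by (simp add: evA_monom)
  ultimately show ?thesis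
    unfolding carlitz_e_def by (intro prod_zero[OF finite_polys_degree_less]) blast
qed

lemma carlitz_e_T_power_self: "carlitz_e T N (T ^ N) = carlitz_D T N"
proof -
  have "carlitz_D T N = (\<Prod>b\<in>polys_degree_less N. evA \<iota> T (monom 1 N - b))"
    unfolding carlitz_D_def
    by (rule prod.reindex_bij_betw[OF bij_betw_polys_degree_less_monic, symmetric])
  then show ?thesis
    by (simp add: carlitz_e_def evA_diff evA_monom)
qed

end

locale Cinf = Fq_closed \<iota> + complete_nonarch_abs absK
  for \<iota> :: "'f::{field,finite} \<Rightarrow> 'K::field" and absK :: "'K \<Rightarrow> real" +
  fixes T :: 'K
  assumes abs_T: "absK T = real CARD('f)"

lemma Cinf_setting_imp_Cinf: "Cinf_setting \<iota> T absK \<Longrightarrow> Cinf \<iota> absK T"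
  by (unfold_locales; auto simp: Cinf_setting_def)

context Cinf
begin

lemma T_nonzero: "T \<noteq> 0"
  using abs_T card_ge_2 by auto

lemma abs_\<iota>: "c \<noteq> 0 \<Longrightarrow> absK (\<iota> c) = 1"
proof -
  assume "c \<noteq> 0"
  then have "\<iota> c \<noteq> 0"
    using inj_\<iota> by (metis \<iota>_0 injD)
  have "\<iota> c ^ (CARD('f) - 1) * \<iota> c = \<iota> c ^ CARD('f)"
    using power_minus_mult[of "CARD('f)" "\<iota> c"] card_ge_2 by simp
  also have "\<dots> = \<iota> c"
    using \<iota>_power_q_power[of c 1] by simp
  finally have "\<iota> c ^ (CARD('f) - 1) = 1"
    using \<open>\<iota> c \<noteq> 0\<close> by simp
  then have "absK (\<iota> c) ^ (CARD('f) - 1) = 1 ^ (CARD('f) - 1)"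
    by (simp flip: abs_power)
  then show ?thesis
    using power_eq_iff_eq_base[of "CARD('f) - 1" "absK (\<iota> c)" 1] card_ge_2 abs_nonneg by simp
qed

lemma abs_evA: "a \<noteq> 0 \<Longrightarrow> absK (evA \<iota> T a) = real CARD('f) ^ degree a"
proof (induction a rule: pCons_induct)
  case (pCons c a)
  show ?case
  proof (cases "a = 0")
    case True
    with pCons show ?thesis
      by (simp add: evA_pCons abs_\<iota>)
  next
    case False
    have T_a: "absK (T * evA \<iota> T a) = real CARD('f) ^ Suc (degree a)"
      using pCons.IH[OF False] by (simp add: abs_mult abs_T)
    have "absK (\<iota> c) \<le> 1"
      by (cases "c = 0") (simp_all add: abs_\<iota>)
    also have "1 < real CARD('f) ^ Suc (degree a)"
      using card_ge_2 by (intro one_less_power) auto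
    finally have "absK (\<iota> c + T * evA \<iota> T a) = absK (T * evA \<iota> T a)"
      using T_a by (intro abs_add_eq_right) simp
    then show ?thesis
      using T_a False by (simp add: evA_pCons)
  qed
qed simp

lemma evA_nonzero: "a \<noteq> 0 \<Longrightarrow> evA \<iota> T a \<noteq> 0"
  using abs_evA[of a] card_ge_2 by auto

lemma carlitz_D_nonzero: "carlitz_D T N \<noteq> 0"
proof -
  have "evA \<iota> T a \<noteq> 0" if "a \<in> monic_polys_degree N" for a
    using that by (auto simp: monic_polys_degree_def intro!: evA_nonzero)
  then show ?thesis
    unfolding carlitz_D_def by (simp add: prod_zero_iff[OF finite_monic_polys_degree])
qed

lemma q_polynomial_Psi: "q_polynomial CARD('f) N (Psi \<iota> T N)"
proof -
  obtain b where "\<And>z. carlitz_e T N z = (\<Sum>i\<le>N. b i * z ^ (CARD('f) ^ i))"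
    using q_polynomial_carlitz_e unfolding q_polynomial_def by blast
  then have "Psi \<iota> T N z = (\<Sum>i\<le>N. (b i / carlitz_D T N) * z ^ (CARD('f) ^ i))" for z
    by (simp add: Psi_eq_carlitz_e_divide_D sum_divide_distrib)
  then show ?thesis
    unfolding q_polynomial_def by (intro exI[of _ "\<lambda>i. b i / carlitz_D T N"]) simp
qed

lemma Psi_T_power: "m \<le> N \<Longrightarrow> Psi \<iota> T N (T ^ m) = of_bool (m = N)"
  by (auto simp: Psi_eq_carlitz_e_divide_D carlitz_e_T_power_less carlitz_e_T_power_self
      carlitz_D_nonzero)

end

section \<open>Carlitz's expansion of \<open>1 / ((t - T) (t - T^q) \<cdots> (t - T^(q^N)))\<close>\<close>

lemma poly_root_sum_low_coeffs:
  fixes p :: "'a::comm_ring_1 poly"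
  assumes "poly p x = 0"
  shows "(\<Sum>k=0..n. coeff p k * x ^ k) = - (\<Sum>k\<in>{n<..degree p}. coeff p k * x ^ k)"
proof -
  have "(\<Sum>k=0..n. coeff p k * x ^ k) + (\<Sum>k\<in>{n<..degree p}. coeff p k * x ^ k)
      = (\<Sum>k\<in>{0..n} \<union> {n<..degree p}. coeff p k * x ^ k)"
    by (rule sum.union_disjoint[symmetric]) auto
  also have "\<dots> = (\<Sum>k\<le>degree p. coeff p k * x ^ k)"
    by (rule sum.mono_neutral_right) (auto simp: coeff_eq_0)
  also have "\<dots> = 0"
    using assms by (simp add: poly_altdef)
  finally show ?thesis
    by (simp add: eq_neg_iff_add_eq_0)
qed

text \<open>Coefficientwise form of \<open>p(t) / (t - \<theta>)\<close> for a root \<open>\<theta>\<close> of \<open>p\<close>: the series is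
  \<open>1 / (t - \<theta>) = - \<Sum>\<^sub>k t\<^sup>k / \<theta>\<^sup>k\<^sup>+\<^sup>1\<close>.\<close>
lemma fps_of_poly_mult_geometric_nth:
  fixes p :: "'a::field poly"
  assumes root: "poly p \<theta> = 0" and nz: "\<theta> \<noteq> 0"
  shows "(fps_of_poly p * Abs_fps (\<lambda>k. - (inverse \<theta> ^ Suc k))) $ n
    = (\<Sum>k\<in>{n<..degree p}. coeff p k * \<theta> ^ (k - Suc n))"
proof -
  have "(fps_of_poly p * Abs_fps (\<lambda>k. - (inverse \<theta> ^ Suc k))) $ n
      = (\<Sum>k=0..n. coeff p k * - (inverse \<theta> ^ Suc (n - k)))"
    by (simp only: fps_mult_nth fps_of_poly_nth fps_nth_Abs_fps)
  also have "\<dots> = (\<Sum>k=0..n. - (inverse \<theta> ^ Suc n * (coeff p k * \<theta> ^ k)))"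
  proof (rule sum.cong[OF refl])
    fix k
    assume "k \<in> {0..n}"
    then have "inverse \<theta> ^ Suc n * \<theta> ^ k = inverse \<theta> ^ Suc (n - k) * (inverse \<theta> ^ k * \<theta> ^ k)"
      by (simp add: power_add[symmetric] mult.assoc Suc_diff_le)
    also have "inverse \<theta> ^ k * \<theta> ^ k = 1"
      using nz by (simp add: power_mult_distrib[symmetric])
    finally have "inverse \<theta> ^ Suc n * \<theta> ^ k = inverse \<theta> ^ Suc (n - k)"
      by (simp only: mult_1_right)
    then show "coeff p k * - (inverse \<theta> ^ Suc (n - k)) = - (inverse \<theta> ^ Suc n * (coeff p k * \<theta> ^ k))"
      by (metis mult.left_commute mult_minus_right)
  qed
  also have "\<dots> = - (inverse \<theta> ^ Suc n * (\<Sum>k=0..n. coeff p k * \<theta> ^ k))"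
    by (simp only: sum_negf sum_distrib_left)
  also have "\<dots> = (\<Sum>k\<in>{n<..degree p}. inverse \<theta> ^ Suc n * \<theta> ^ k * coeff p k)"
    by (simp add: poly_root_sum_low_coeffs[OF root] sum_distrib_left mult_ac)
  also have "\<dots> = (\<Sum>k\<in>{n<..degree p}. coeff p k * \<theta> ^ (k - Suc n))"
  proof (rule sum.cong[OF refl])
    fix k
    assume "k \<in> {n<..degree p}"
    then have "\<theta> ^ k = \<theta> ^ Suc n * \<theta> ^ (k - Suc n)"
      by (simp only: power_add[symmetric]) simp
    then show "inverse \<theta> ^ Suc n * \<theta> ^ k * coeff p k = coeff p k * \<theta> ^ (k - Suc n)"
      using nz by (simp add: field_simps)
  qed
  finally show ?thesis .
qed

context Cinf
begin

text \<open>Expanding each \<open>\<Psi>\<^sub>N(1/T^(n+1))\<close> by \<open>q\<close>-linearity gives a combination of geometric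
  series in \<open>t / T^(q^i)\<close>; multiplied by \<open>p\<close>, only the top coefficient survives, because
  \<open>\<Psi>\<^sub>N\<close> vanishes at \<open>1, T, \<dots>, T^(N-1)\<close>.\<close>
lemma fps_of_poly_mult_Psi_series:
  assumes deg: "degree p = Suc N" and monic: "lead_coeff p = 1"
    and roots: "\<And>i. i \<le> N \<Longrightarrow> poly p (T ^ (CARD('f) ^ i)) = 0"
  shows "fps_of_poly p * Abs_fps (\<lambda>n. - Psi \<iota> T N (inverse (T ^ (n + 1)))) = 1"
proof (rule fps_ext)
  fix n
  let ?\<theta> = "\<lambda>i. T ^ (CARD('f) ^ i)"
  obtain b where b: "\<And>z. Psi \<iota> T N z = (\<Sum>i\<le>N. b i * z ^ (CARD('f) ^ i))"
    using q_polynomial_Psi unfolding q_polynomial_def by blast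
  have geom: "inverse (T ^ (n + 1)) ^ (CARD('f) ^ i) = inverse (?\<theta> i) ^ Suc n" for n i
    by (simp only: power_inverse power_mult[symmetric] mult.commute Suc_eq_plus1)
  have "Abs_fps (\<lambda>n. - Psi \<iota> T N (inverse (T ^ (n + 1))))
      = (\<Sum>i\<le>N. fps_const (b i) * Abs_fps (\<lambda>k. - (inverse (?\<theta> i) ^ Suc k)))"
    by (rule fps_ext) (simp only: fps_nth_Abs_fps b geom fps_sum_nth fps_mult_left_const_nth
        mult_minus_right sum_negf)
  then have "(fps_of_poly p * Abs_fps (\<lambda>n. - Psi \<iota> T N (inverse (T ^ (n + 1))))) $ n
      = (\<Sum>i\<le>N. b i * (fps_of_poly p * Abs_fps (\<lambda>k. - (inverse (?\<theta> i) ^ Suc k))) $ n)"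
    by (simp add: sum_distrib_left fps_sum_nth mult.left_commute[of "fps_of_poly p"])
  also have "\<dots> = (\<Sum>i\<le>N. b i * (\<Sum>k\<in>{n<..Suc N}. coeff p k * ?\<theta> i ^ (k - Suc n)))"
    using fps_of_poly_mult_geometric_nth[OF roots, of _ n] T_nonzero by (simp add: deg)
  also have "\<dots> = (\<Sum>k\<in>{n<..Suc N}. coeff p k * Psi \<iota> T N (T ^ (k - Suc n)))"
    by (simp add: b sum_distrib_left mult.left_commute sum.swap[of _ "{..N}"]
        flip: power_mult add: mult.commute)
  also have "\<dots> = (\<Sum>k\<in>{n<..Suc N}. if k = Suc N + n then coeff p k else 0)"
    by (intro sum.cong refl) (auto simp: Psi_T_power)
  also have "\<dots> = 1 $ n"
    using monic deg by (cases n) simp_all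
  finally show "(fps_of_poly p * Abs_fps (\<lambda>n. - Psi \<iota> T N (inverse (T ^ (n + 1))))) $ n = 1 $ n" .
qed

theorem prod_X_minus_T_powers_mult_Psi_series:
  "(\<Prod>j=0..N. fps_X - fps_const (T ^ (CARD('f) ^ j)))
     * Abs_fps (\<lambda>n. - Psi \<iota> T N (inverse (T ^ (n + 1)))) = 1"
proof -
  define p where "p = (\<Prod>j=0..N. [:- (T ^ (CARD('f) ^ j)), 1:])"
  have "fps_of_poly [:- a, 1:] = fps_X - fps_const a" for a :: 'K
    by (simp add: fps_of_poly_pCons)
  then have "fps_of_poly p = (\<Prod>j=0..N. fps_X - fps_const (T ^ (CARD('f) ^ j)))"
    by (simp only: p_def fps_of_poly_prod)
  moreover have "fps_of_poly p * Abs_fps (\<lambda>n. - Psi \<iota> T N (inverse (T ^ (n + 1)))) = 1"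
  proof (rule fps_of_poly_mult_Psi_series)
    show "degree p = Suc N"
      unfolding p_def by (subst degree_prod_eq_sum_degree) auto
    show "lead_coeff p = 1"
      unfolding p_def by (simp add: lead_coeff_prod)
    show "poly p (T ^ (CARD('f) ^ i)) = 0" if "i \<le> N" for i
      unfolding p_def poly_prod using that by (intro prod_zero) auto
  qed
  ultimately show ?thesis
    by simp
qed

end

section \<open>The functional equation of \<open>\<Omega>\<close>\<close>

lemma fps_mult_1_minus_const_X_nth:
  fixes f :: "'a::comm_ring_1 fps"
  shows "(f * (1 - fps_const c * fps_X)) $ n = f $ n - c * (if n = 0 then 0 else f $ (n - 1))"
proof -
  have "f * (1 - fps_const c * fps_X) = f - fps_const c * (fps_X * f)"
    by (simp add: right_diff_distrib mult.commute mult.left_commute)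
  then show ?thesis
    by simp
qed

lemma fps_const_mult_1_minus_inverse_X:
  fixes a u :: "'a::field"
  assumes "u \<noteq> 0"
  shows "fps_const a * (1 - fps_const (inverse u) * fps_X)
    = fps_const (a * - inverse u) * (fps_X - fps_const u)"
  using assms by (intro fps_ext) (auto simp: fps_X_nth field_simps)

context Cinf
begin

lemma abs_frob_neg: "absK (frob CARD('f) (- int k) x) = root (CARD('f) ^ k) (absK x)"
proof -
  have "absK (frob CARD('f) (- int k) x) ^ (CARD('f) ^ k) = absK x"
    by (simp flip: abs_power)
  then show ?thesis
    by (rule real_root_pos_unique[OF card_power_pos abs_nonneg, symmetric])
qed

lemma conv_abs_frob:
  assumes "conv_abs absK s a"
  shows "conv_abs absK (\<lambda>m. frob CARD('f) j (s m)) (frob CARD('f) j a)"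
proof (cases j rule: int_cases2)
  case (nonneg k)
  have "absK (frob CARD('f) j (s m) - frob CARD('f) j a) = absK (s m - a) ^ (CARD('f) ^ k)" for m
    using nonneg by (simp only: frob_of_nat frobenius_power_diff[symmetric] abs_power)
  then show ?thesis
    using assms card_power_pos[of k] unfolding conv_abs_def by (simp add: power_tendsto_0_iff)
next
  case (nonpos k)
  have "(\<lambda>m. root (CARD('f) ^ k) (absK (s m - a))) \<longlonglongrightarrow> root (CARD('f) ^ k) 0"
    using assms unfolding conv_abs_def by (intro tendsto_real_root)
  moreover have "absK (frob CARD('f) j (s m) - frob CARD('f) j a) = root (CARD('f) ^ k) (absK (s m - a))" for m
    using nonpos by (simp only: frob_diff[symmetric] abs_frob_neg)
  ultimately show ?thesis
    unfolding conv_abs_def by simp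
qed

definition Omega_partial :: "int \<Rightarrow> nat \<Rightarrow> 'K fps" where
  "Omega_partial s m = (\<Prod>i=1..m. 1 - fps_const (frob CARD('f) (s + int i) (inverse T)) * fps_X)"

lemma Omega_partial_Suc:
  "Omega_partial s (Suc m)
    = Omega_partial s m * (1 - fps_const (frob CARD('f) (s + int (Suc m)) (inverse T)) * fps_X)"
  by (simp add: Omega_partial_def prod.nat_ivl_Suc')

lemma Omega_partial_add: "Omega_partial s (r + m) = Omega_partial s r * Omega_partial (s + int r) m"
proof (induction m)
  case 0
  then show ?case
    by (simp add: Omega_partial_def)
next
  case (Suc m)
  have "s + int (Suc (r + m)) = s + int r + int (Suc m)"
    by simp
  with Suc show ?case
    by (simp only: add_Suc_right Omega_partial_Suc mult.assoc)
qed

lemma twist_Omega_partial: "twist CARD('f) a (Omega_partial s m) = Omega_partial (a + s) m"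
  by (simp add: Omega_partial_def twist_prod twist_diff twist_mult frob_frob add.assoc)

lemma Omega_partial_nth_0: "Omega_partial s m $ 0 = 1"
  by (induction m) (simp_all add: Omega_partial_Suc fps_mult_1_minus_const_X_nth,
      simp add: Omega_partial_def)

lemma abs_frob_inverse_T: "absK (frob CARD('f) (int i) (inverse T)) = inverse (real CARD('f) ^ (CARD('f) ^ i))"
  by (simp only: frob_of_nat) (simp add: abs_power abs_inverse abs_T power_inverse)

lemma abs_frob_inverse_T_le_1: "absK (frob CARD('f) (int i) (inverse T)) \<le> 1"
proof -
  have "1 \<le> real CARD('f) ^ (CARD('f) ^ i)"
    using card_ge_2 by (intro one_le_power) simp
  then show ?thesis
    by (simp only: abs_frob_inverse_T) (simp add: inverse_le_1_iff)
qed

lemma abs_Omega_partial_0_nth_le: "absK (Omega_partial 0 m $ n) \<le> 1"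
proof (induction m arbitrary: n)
  case 0
  then show ?case
    by (simp add: Omega_partial_def fps_one_nth)
next
  case (Suc m)
  let ?d = "frob CARD('f) (int (Suc m)) (inverse T)"
  let ?prev = "if n = 0 then 0 else Omega_partial 0 m $ (n - 1)"
  have "Omega_partial 0 (Suc m) $ n = Omega_partial 0 m $ n - ?d * ?prev"
    by (simp only: Omega_partial_Suc fps_mult_1_minus_const_X_nth add_0)
  moreover have "absK (?d * ?prev) \<le> 1"
  proof -
    have "absK ?d \<le> 1"
      by (rule abs_frob_inverse_T_le_1)
    moreover have "absK ?prev \<le> 1"
      using Suc.IH[of "n - 1"] by simp
    ultimately show ?thesis
      unfolding abs_mult by (intro mult_le_one abs_nonneg)
  qed
  ultimately show ?case
    using abs_ultrametric[of "Omega_partial 0 m $ n" "- (?d * ?prev)"] Suc.IH[of n] by simp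
qed

lemma conv_Omega_partial_0: "\<exists>L. conv_abs absK (\<lambda>m. Omega_partial 0 m $ n) L"
proof (rule conv_abs_if_differences_tendsto_0)
  have bound: "absK (Omega_partial 0 (Suc m) $ n - Omega_partial 0 m $ n) \<le> inverse (real CARD('f) ^ Suc m)"
    for m
  proof -
    let ?d = "frob CARD('f) (int (Suc m)) (inverse T)"
    let ?prev = "if n = 0 then 0 else Omega_partial 0 m $ (n - 1)"
    have "Omega_partial 0 (Suc m) $ n - Omega_partial 0 m $ n = - (?d * ?prev)"
      by (simp only: Omega_partial_Suc fps_mult_1_minus_const_X_nth add_0) simp
    then have "absK (Omega_partial 0 (Suc m) $ n - Omega_partial 0 m $ n) = absK ?d * absK ?prev"
      by (simp only: abs_minus abs_mult)
    also have "\<dots> \<le> absK ?d"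
      using abs_Omega_partial_0_nth_le[of m "n - 1"] abs_nonneg[of ?d] by (simp add: mult_left_le)
    also have "\<dots> \<le> inverse (real CARD('f) ^ Suc m)"
      using card_ge_2 by (simp only: abs_frob_inverse_T)
        (intro le_imp_inverse_le power_increasing self_le_ge2_pow; simp)
    finally show ?thesis .
  qed
  have lim: "(\<lambda>m. inverse (real CARD('f) ^ Suc m)) \<longlonglongrightarrow> 0"
    using card_ge_2 by (intro LIMSEQ_Suc LIMSEQ_inverse_realpow_zero) simp
  show "(\<lambda>m. absK (Omega_partial 0 (Suc m) $ n - Omega_partial 0 m $ n)) \<longlonglongrightarrow> 0"
    by (rule tendsto_sandwich[OF always_eventually always_eventually tendsto_const lim])
      (use bound abs_nonneg in blast)+
qed

definition Omega_prod :: "int \<Rightarrow> 'K fps" where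
  "Omega_prod s = Abs_fps (\<lambda>n. lim_abs absK (\<lambda>m. Omega_partial s m $ n))"

lemma conv_Omega_partial: "conv_abs absK (\<lambda>m. Omega_partial s m $ n) (Omega_prod s $ n)"
proof -
  obtain L where "conv_abs absK (\<lambda>m. Omega_partial 0 m $ n) L"
    using conv_Omega_partial_0 by blast
  from conv_abs_frob[OF this, of s]
  have "conv_abs absK (\<lambda>m. Omega_partial s m $ n) (frob CARD('f) s L)"
    using twist_Omega_partial[of s 0] by (simp flip: twist_nth)
  then show ?thesis
    by (simp add: Omega_prod_def lim_abs_eqI)
qed

lemma twist_Omega_prod: "twist CARD('f) s (Omega_prod 0) = Omega_prod s"
proof (rule fps_ext)
  fix n
  have "conv_abs absK (\<lambda>m. Omega_partial s m $ n) (frob CARD('f) s (Omega_prod 0 $ n))"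
    using conv_abs_frob[OF conv_Omega_partial[of 0 n], of s] twist_Omega_partial[of s 0]
    by (simp flip: twist_nth)
  then show "twist CARD('f) s (Omega_prod 0) $ n = Omega_prod s $ n"
    using conv_abs_unique conv_Omega_partial by auto
qed

lemma Omega_prod_nth_0: "Omega_prod s $ 0 = 1"
  using conv_abs_unique[OF conv_Omega_partial[of s 0]] conv_abs_const[of 1]
  by (simp add: Omega_partial_nth_0)

lemma Omega_prod_eq_Omega_partial_mult: "Omega_prod s = Omega_partial s r * Omega_prod (s + int r)"
proof (rule fps_ext)
  fix n
  have "conv_abs absK (\<lambda>m. Omega_partial s (m + r) $ n) (Omega_prod s $ n)"
    by (rule conv_abs_ignore_initial[OF conv_Omega_partial])
  moreover have "conv_abs absK (\<lambda>m. Omega_partial s (m + r) $ n)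
      (\<Sum>j=0..n. Omega_partial s r $ j * Omega_prod (s + int r) $ (n - j))"
    unfolding add.commute[of _ r] Omega_partial_add fps_mult_nth
    by (intro conv_abs_sum conv_abs_cmult conv_Omega_partial) simp
  ultimately show "Omega_prod s $ n = (Omega_partial s r * Omega_prod (s + int r)) $ n"
    unfolding fps_mult_nth by (rule conv_abs_unique)
qed

lemma Omega_eq: "Omega absK CARD('f) T Tt = fps_const (inverse (Tt ^ CARD('f))) * Omega_prod 0"
  by (simp add: Omega_def Omega_prod_def Omega_partial_def power_inverse)

lemma twist_Omega:
  "twist CARD('f) s (Omega absK CARD('f) T Tt)
    = fps_const (frob CARD('f) s (inverse (Tt ^ CARD('f)))) * Omega_prod s"
  by (simp add: Omega_eq twist_mult twist_Omega_prod)

context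
  fixes Tt :: 'K
  assumes Tt_power: "Tt ^ (CARD('f) - 1) = - T"
begin

lemma Tt_nonzero: "Tt \<noteq> 0"
  using Tt_power T_nonzero card_ge_2 by (auto simp: power_0_left)

text \<open>The twists of \<open>(1/Tt) (-1/T) = 1/Tt^q\<close>, where \<open>1/Tt\<close> is the \<open>(-1)\<close>-twist of \<open>1/Tt^q\<close>.\<close>
lemma frob_Omega_const_Suc:
  "frob CARD('f) s (inverse (Tt ^ CARD('f))) * - inverse (frob CARD('f) (s + 1) T)
    = frob CARD('f) (s + 1) (inverse (Tt ^ CARD('f)))"
proof -
  have twist_const: "frob CARD('f) (- 1) (inverse (Tt ^ CARD('f))) = inverse Tt"
    using frob_neg_eq_iff[of 1 "inverse (Tt ^ CARD('f))" "inverse Tt"] by (simp add: power_inverse)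
  have "Tt * Tt ^ (CARD('f) - 1) = Tt ^ CARD('f)"
    using power_minus_mult[of "CARD('f)" Tt] card_ge_2 by (simp add: mult.commute)
  moreover have "- inverse T = inverse (Tt ^ (CARD('f) - 1))"
    using Tt_power by simp
  ultimately have "inverse Tt * - inverse T = inverse (Tt ^ CARD('f))"
    by (simp flip: inverse_mult_distrib)
  then have "frob CARD('f) (s + 1) (frob CARD('f) (- 1) (inverse (Tt ^ CARD('f))) * - inverse T)
      = frob CARD('f) (s + 1) (inverse (Tt ^ CARD('f)))"
    by (simp only: twist_const)
  then show ?thesis
    by (simp only: frob_mult frob_minus frob_inverse frob_frob) simp
qed

lemma fps_const_mult_Omega_partial:
  "fps_const (frob CARD('f) s (inverse (Tt ^ CARD('f)))) * Omega_partial s r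
    = fps_const (frob CARD('f) (s + int r) (inverse (Tt ^ CARD('f))))
      * (\<Prod>i=1..r. fps_X - fps_const (frob CARD('f) (s + int i) T))"
proof (induction r)
  case 0
  then show ?case
    by (simp add: Omega_partial_def)
next
  case (Suc r)
  let ?c = "\<lambda>j. frob CARD('f) j (inverse (Tt ^ CARD('f)))"
  let ?u = "frob CARD('f) (s + int (Suc r)) T"
  let ?P = "\<Prod>i=1..r. fps_X - fps_const (frob CARD('f) (s + int i) T)"
  have u: "?u \<noteq> 0"
    using T_nonzero by simp
  have "fps_const (?c s) * Omega_partial s (Suc r)
      = (fps_const (?c s) * Omega_partial s r) * (1 - fps_const (inverse ?u) * fps_X)"
    by (simp only: Omega_partial_Suc frob_inverse mult.assoc)
  also have "\<dots> = ?P * (fps_const (?c (s + int r)) * (1 - fps_const (inverse ?u) * fps_X))"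
    by (simp only: Suc.IH) (simp only: mult_ac)
  also have "\<dots> = ?P * (fps_const (?c (s + int r) * - inverse ?u) * (fps_X - fps_const ?u))"
    by (simp only: fps_const_mult_1_minus_inverse_X[OF u])
  also have "?c (s + int r) * - inverse ?u = ?c (s + int (Suc r))"
    using frob_Omega_const_Suc[of "s + int r"] by (simp only: of_nat_Suc add.assoc add.commute[of 1])
  also have "?P * (fps_const (?c (s + int (Suc r))) * (fps_X - fps_const ?u))
      = fps_const (?c (s + int (Suc r))) * (\<Prod>i=1..Suc r. fps_X - fps_const (frob CARD('f) (s + int i) T))"
    by (simp add: prod.nat_ivl_Suc' mult_ac)
  finally show ?case .
qed

theorem twist_Omega_eq_prod_mult:
  "twist CARD('f) s (Omega absK CARD('f) T Tt)
    = (\<Prod>i=1..r. fps_X - fps_const (frob CARD('f) (s + int i) T))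
      * twist CARD('f) (s + int r) (Omega absK CARD('f) T Tt)"
proof -
  let ?c = "\<lambda>j. frob CARD('f) j (inverse (Tt ^ CARD('f)))"
  have "twist CARD('f) s (Omega absK CARD('f) T Tt) = fps_const (?c s) * Omega_prod s"
    by (rule twist_Omega)
  also have "\<dots> = fps_const (?c s) * Omega_partial s r * Omega_prod (s + int r)"
    by (subst Omega_prod_eq_Omega_partial_mult[of s r]) (rule mult.assoc[symmetric])
  also have "\<dots> = fps_const (?c (s + int r)) * (\<Prod>i=1..r. fps_X - fps_const (frob CARD('f) (s + int i) T))
      * Omega_prod (s + int r)"
    by (simp only: fps_const_mult_Omega_partial)
  also have "\<dots> = (\<Prod>i=1..r. fps_X - fps_const (frob CARD('f) (s + int i) T))
      * twist CARD('f) (s + int r) (Omega absK CARD('f) T Tt)"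
    by (simp only: twist_Omega mult_ac)
  finally show ?thesis .
qed

lemma twist_Omega_nonzero: "twist CARD('f) s (Omega absK CARD('f) T Tt) \<noteq> 0"
proof
  assume zero: "twist CARD('f) s (Omega absK CARD('f) T Tt) = 0"
  have "frob CARD('f) s (inverse (Tt ^ CARD('f))) = twist CARD('f) s (Omega absK CARD('f) T Tt) $ 0"
    by (simp add: twist_Omega Omega_prod_nth_0)
  also have "\<dots> = 0"
    by (simp only: zero fps_zero_nth)
  finally show False
    using Tt_nonzero by simp
qed

lemma twist_Omega_divide_nonneg:
  "twist CARD('f) (int n) (Omega absK CARD('f) T Tt) / twist CARD('f) (- 1) (Omega absK CARD('f) T Tt)
    = Abs_fps (\<lambda>m. - Psi \<iota> T n (inverse (T ^ (m + 1))))"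
proof -
  let ?F = "Abs_fps (\<lambda>m. - Psi \<iota> T n (inverse (T ^ (m + 1))))"
  let ?P = "\<Prod>j=0..n. fps_X - fps_const (T ^ (CARD('f) ^ j))"
  let ?\<Omega> = "\<lambda>s. twist CARD('f) s (Omega absK CARD('f) T Tt)"
  have shift: "- 1 + int (Suc n) = int n"
    by simp
  have "(\<Prod>i=1..Suc n. fps_X - fps_const (frob CARD('f) (- 1 + int i) T)) = ?P"
    by (simp only: One_nat_def prod.shift_bounds_cl_Suc_ivl) (intro prod.cong refl; simp)
  then have twist_minus_1: "?\<Omega> (- 1) = ?P * ?\<Omega> (int n)"
    using twist_Omega_eq_prod_mult[of "- 1" "Suc n"] by (simp only: shift)
  have "?\<Omega> (int n) = (?P * ?F) * ?\<Omega> (int n)"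
    by (simp only: prod_X_minus_T_powers_mult_Psi_series mult_1)
  also have "\<dots> = ?F * ?\<Omega> (- 1)"
    by (simp only: twist_minus_1 mult_ac)
  finally show ?thesis
    by (simp only: nonzero_mult_div_cancel_right[OF twist_Omega_nonzero])
qed

lemma twist_Omega_divide_neg:
  "twist CARD('f) (- int (Suc m)) (Omega absK CARD('f) T Tt) / twist CARD('f) (- 1) (Omega absK CARD('f) T Tt)
    = (\<Prod>i=1..m. fps_X - fps_const (frob CARD('f) (- int i) T))"
proof -
  have shift: "- int (Suc m) + int m = - 1"
    by simp
  have "(\<Prod>i=1..m. fps_X - fps_const (frob CARD('f) (- int (Suc m) + int i) T))
      = (\<Prod>i=1..m. fps_X - fps_const (frob CARD('f) (- int i) T))"
    by (subst prod.atLeastAtMost_rev) (intro prod.cong refl; simp add: of_nat_diff)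
  then have "twist CARD('f) (- int (Suc m)) (Omega absK CARD('f) T Tt)
      = (\<Prod>i=1..m. fps_X - fps_const (frob CARD('f) (- int i) T))
        * twist CARD('f) (- 1) (Omega absK CARD('f) T Tt)"
    using twist_Omega_eq_prod_mult[of "- int (Suc m)" m] by (simp only: shift)
  then show ?thesis
    by (simp only: nonzero_mult_div_cancel_right[OF twist_Omega_nonzero])
qed

end

end

theorem lemma5:
  fixes \<iota> :: "'f::{field,finite} \<Rightarrow> 'K::field"
    and T Tt :: 'K and absK :: "'K \<Rightarrow> real" and N :: int
  assumes "Cinf_setting \<iota> T absK"
    and "Tt ^ (CARD('f) - 1) = - T"
  shows "(N \<ge> 0 \<longrightarrow>
            twist CARD('f) N (Omega absK CARD('f) T Tt) / twist CARD('f) (-1) (Omega absK CARD('f) T Tt)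
              = Abs_fps (\<lambda>n. - Psi \<iota> T (nat N) (inverse (T ^ (n + 1)))))
       \<and> (N < 0 \<longrightarrow>
            twist CARD('f) N (Omega absK CARD('f) T Tt) / twist CARD('f) (-1) (Omega absK CARD('f) T Tt)
              = (\<Prod>i=1..nat (- N) - 1. fps_X - fps_const (frob CARD('f) (- int i) T)))"
proof -
  interpret Cinf \<iota> absK T
    using assms(1) by (rule Cinf_setting_imp_Cinf)
  show ?thesis
  proof (intro conjI impI)
    assume "0 \<le> N"
    then obtain n where N: "N = int n"
      by (rule nonneg_int_cases)
    then have n: "nat N = n"
      by simp
    show "twist CARD('f) N (Omega absK CARD('f) T Tt) / twist CARD('f) (-1) (Omega absK CARD('f) T Tt)
        = Abs_fps (\<lambda>n. - Psi \<iota> T (nat N) (inverse (T ^ (n + 1))))"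
      unfolding n unfolding N by (rule twist_Omega_divide_nonneg[OF assms(2)])
  next
    assume "N < 0"
    then obtain k where k: "N = - int k" "0 < k"
      by (rule neg_int_cases)
    then obtain m where "k = Suc m"
      using gr0_implies_Suc by blast
    with k have N: "N = - int (Suc m)"
      by simp
    then have m: "nat (- N) - 1 = m"
      by simp
    show "twist CARD('f) N (Omega absK CARD('f) T Tt) / twist CARD('f) (-1) (Omega absK CARD('f) T Tt)
        = (\<Prod>i=1..nat (- N) - 1. fps_X - fps_const (frob CARD('f) (- int i) T))"
      unfolding m unfolding N by (rule twist_Omega_divide_neg[OF assms(2)])
  qed
qed

end
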